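(* Let $h\in\{2,\dots,H\}$, $\alpha\in(0,1)$ and $\eta>0$. If a finitely supported distribution $P$ over $\Pi_{\mathrm{M}}$ is an $(\alpha,\eta)$-randomized policy cover relative to $\bar\Pi_\eta$ for layer $h$ in the extended MDP $\bar{\mathcal{M}}$, then $P$ is an $(\alpha/2,\varepsilon)$-randomized policy cover for layer $h$ in the true MDP $\mathcal{M}$, where $\varepsilon:=4Hd^{3/2}\eta$.
   Context: Setting (Low-Rank MDP). Fix horizon $H\in\mathbb{N}$, dimension $d\in\mathbb{N}$, a finite action set $\mathcal{A}$ with $|\mathcal{A}|=A$, and a measurable state space $\mathcal{X}=\mathcal{X}_1\sqcup\cdots\sqcup\mathcal{X}_H$ (disjoint layers) carrying a $\sigma$-finite measure $\nu$. The MDP $\mathcal{M}$ has an initial distribution $\rho$ on $\mathcal{X}_1$ and, for each $h\in[H-1]$, measurable maps $\phi^\star_h:\mathcal{X}_h\times\mathcal{A}\to\mathbb{R}^d$ and $\mu^\star_{h+1}:\mathcal{X}_{h+1}\to\mathbb{R}^d$ such that for every $(x,a)\in\mathcal{X}_h\times\mathcal{A}$ the function $x'\mapsto\mu^\star_{h+1}(x')^\top\phi^\star_h(x,a)$ is a probability density w.r.t. $\nu$ on $\mathcal{X}_{h+1}$; this density is the transition kernel $T_h(\cdot\mid x,a)$. $\Pi_{\mathrm{M}}$ denotes the set of randomized Markov policies $\pi:\mathcal{X}\to\Delta(\mathcal{A})$; an episode under $\pi$ draws $x_1\sim\rho$, $a_h\sim\pi(x_h)$, $x_{h+1}\sim T_h(\cdot\mid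 x_h,a_h)$. For $h\ge2$ and $x\in\mathcal{X}_h$, $d^\pi(x)$ denotes the density w.r.t. $\nu$ of the law of $x_h$ under $\pi$. Normalization: $\|\phi^\star_h(x,a)\|\le 1$ for all $h,x,a$, and $\|\int_{\mathcal{X}_h}\mu^\star_h(x)g(x)\,d\nu(x)\|\le\sqrt d$ for every measurable $g:\mathcal{X}_h\to[0,1]$. $\|\cdot\|$ is the Euclidean norm. Randomized policy cover (true MDP): $P$ is an $(\alpha,\varepsilon)$-randomized policy cover for layer $h$ if $\mathbb{E}_{\pi\sim P}[d^\pi(x)]\ge\alpha\sup_{\pi'\in\Pi_{\mathrm{M}}}d^{\pi'}(x)$ for all $x\in\mathcal{X}_h$ with $\sup_{\pi'\in\Pi_{\mathrm{M}}}d^{\pi'}(x)\ge\varepsilon\|\mu^\star_h(x)\|$. Extended MDP $\bar{\mathcal{M}}$: add terminal states $\mathfrak{t}_1,\dots,\mathfrak{t}_H$ (with $\bar{\mathcal{X}}_h=\mathcal{X}_h\cup\{\mathfrak{t}_h\}$) and a terminal action $\mathfrak{a}$ (with $\bar{\mathcal{A}}=\mathcal{A}\cup\{\mathfrak{a}\}$). Transitions from $(x,a)\in\mathcal{X}_h\times\mathcal{A}$ are as in $\mathcal{M}$; taking $\mathfrak{a}$ in any state of layer $h$, or any action in $\mathfrak{t}_h$, leads deterministically to $\mathfrak{t}_{h+1}$; the initial distribution is $\rho$. The base measure is $\bar\nu=\nu+\sum_h\delta_{\mathfrak{t}_h}$, and for $x\in\bar{\mathcal{X}}_h$, $\bar d^\pi(x)$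 is the density w.r.t. $\bar\nu$ of the law of $x_h$ under $\pi$ in $\bar{\mathcal{M}}$. $\bar\Pi_{\mathrm{M}}$ is the set of randomized Markov policies of $\bar{\mathcal{M}}$ (with $\pi(\mathfrak{t}_h)=\mathfrak{a}$); policies of $\Pi_{\mathrm{M}}$ are viewed as elements of $\bar\Pi_{\mathrm{M}}$ that never play $\mathfrak{a}$ on $\mathcal{X}$ (for them $\bar d^\pi=d^\pi$ on $\mathcal{X}$). For $x\in\mathcal{X}_h$, $\|\bar\mu^\star_h(x)\|=\|\mu^\star_h(x)\|$. Reachable states: for $h\ge2$ and $\Pi'\subseteq\bar\Pi_{\mathrm{M}}$, $\mathcal{X}_{h,\eta}(\Pi'):=\{x\in\mathcal{X}_h:\exists\pi\in\Pi',\ \bar d^\pi(x)\ge\eta\|\mu^\star_h(x)\|\}$; by convention $\mathcal{X}_{1,\eta}(\Pi')=\mathcal{X}_1$. Truncated policy class: $\bar\Pi_{0,\eta}=\bar\Pi_{\mathrm{M}}$ and for $h\ge1$, $\pi\in\bar\Pi_{h,\eta}$ iff there exists $\pi'\in\bar\Pi_{h-1,\eta}$ with $\pi(x)=\pi'(x)$ for all $x$ in layers $t\neq h$, and for $x\in\mathcal{X}_h$: $\pi(x)=\pi'(x)$ if $x\in\mathcal{X}_{h,\eta}(\bar\Pi_{h-1,\eta})$ and $\pi(x)=\mathfrak{a}$ otherwise (and $\pi(\mathfrak{t}_h)=\mathfrak{a}$). Set $\bar\Pi_\eta:=\bar\Pi_{H,\eta}$. Relative policy cover: $P$ is an $(\alpha,\eta)$-randomized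 policy cover relative to $\Pi\subseteq\bar\Pi_{\mathrm{M}}$ for layer $h$ in $\bar{\mathcal{M}}$ if $\mathbb{E}_{\pi\sim P}[\bar d^\pi(x)]\ge\alpha\sup_{\pi'\in\Pi}\bar d^{\pi'}(x)$ for all $x\in\mathcal{X}_h$ with $\sup_{\pi'\in\Pi}\bar d^{\pi'}(x)\ge\eta\|\mu^\star_h(x)\|$. *)

theory Defs
  imports "HOL-Probability.Probability"
begin

text \<open>States have type 'x, actions type 'a, the feature dimension is d = CARD('d). The terminal action of the extended MDP is encoded as None, a real action a
  as Some a; extended policies map states to distributions over 'a option.
  Terminal states are not represented explicitly: they only ever play the terminal
  action, and the densities on non-terminal states do not depend on them.\<close>

record ('x, 'a, 'd::finite) lr_mdp =
  horizon :: nat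
  acts :: "'a set"
  base :: "'x measure"
  init :: "'x measure"
  layer :: "'x \<Rightarrow> nat"
  phi :: "nat \<Rightarrow> 'x \<Rightarrow> 'a \<Rightarrow> real ^ 'd"
  mu :: "nat \<Rightarrow> 'x \<Rightarrow> real ^ 'd"

definition layer_set :: "('x, 'a, 'd::finite) lr_mdp \<Rightarrow> nat \<Rightarrow> 'x set" where
  "layer_set M h = {x \<in> space (base M). layer M x = h}"

definition low_rank_mdp :: "('x, 'a, 'd::finite) lr_mdp \<Rightarrow> bool" where
  "low_rank_mdp M \<longleftrightarrow>
     finite (acts M) \<and> acts M \<noteq> {} \<and>
     sigma_finite_measure (base M) \<and>
     (\<forall>x\<in>space (base M). layer M x \<in> {1..horizon M}) \<and>
     (\<forall>h. layer_set M h \<in> sets (base M)) \<and>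
     sets (init M) = sets (base M) \<and> prob_space (init M) \<and>
     emeasure (init M) (layer_set M 1) = 1 \<and>
     (\<forall>h\<in>{1..<horizon M}. \<forall>a\<in>acts M.
        (\<lambda>x. indicator (layer_set M h) x *\<^sub>R phi M h x a) \<in> borel_measurable (base M)) \<and>
     (\<forall>h\<in>{2..horizon M}.
        (\<lambda>x. indicator (layer_set M h) x *\<^sub>R mu M h x) \<in> borel_measurable (base M)) \<and>
     (\<forall>h\<in>{1..<horizon M}. \<forall>x\<in>layer_set M h. \<forall>a\<in>acts M.
        (\<forall>x'\<in>layer_set M (Suc h). 0 \<le> mu M (Suc h) x' \<bullet> phi M h x a) \<and>
        (\<integral>\<^sup>+x'\<in>layer_set M (Suc h). ennreal (mu M (Suc h) x' \<bullet> phi M h x a) \<partial>base M) = 1) \<and>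
     (\<forall>h\<in>{1..<horizon M}. \<forall>x\<in>layer_set M h. \<forall>a\<in>acts M. norm (phi M h x a) \<le> 1) \<and>
     (\<forall>h\<in>{2..horizon M}. \<forall>g\<in>borel_measurable (base M).
        (\<forall>x\<in>layer_set M h. 0 \<le> g x \<and> g x \<le> 1) \<longrightarrow>
        integrable (base M) (\<lambda>x. (indicator (layer_set M h) x * g x) *\<^sub>R mu M h x) \<and>
        norm (\<integral>x. (indicator (layer_set M h) x * g x) *\<^sub>R mu M h x \<partial>base M)
          \<le> sqrt (real CARD('d)))"

definition markov_policy :: "('x, 'a, 'd::finite) lr_mdp \<Rightarrow> ('x \<Rightarrow> 'a \<Rightarrow> real) \<Rightarrow> bool" where
  "markov_policy M \<pi> \<longleftrightarrow>
     (\<forall>x\<in>space (base M). (\<forall>a\<in>acts M. 0 \<le> \<pi> x a) \<and> (\<Sum>a\<in>acts M. \<pi> x a) = 1) \<and>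
     (\<forall>a\<in>acts M. (\<lambda>x. \<pi> x a) \<in> borel_measurable (base M))"

definition ext_policy :: "('x, 'a, 'd::finite) lr_mdp \<Rightarrow> ('x \<Rightarrow> 'a option \<Rightarrow> real) \<Rightarrow> bool" where
  "ext_policy M \<pi> \<longleftrightarrow>
     (\<forall>x\<in>space (base M). (\<forall>b\<in>insert None (Some ` acts M). 0 \<le> \<pi> x b) \<and>
        (\<Sum>b\<in>insert None (Some ` acts M). \<pi> x b) = 1) \<and>
     (\<forall>b\<in>insert None (Some ` acts M). (\<lambda>x. \<pi> x b) \<in> borel_measurable (base M))"

definition embed_policy :: "('x \<Rightarrow> 'a \<Rightarrow> real) \<Rightarrow> ('x \<Rightarrow> 'a option \<Rightarrow> real)" where
  "embed_policy \<pi> = (\<lambda>x b. case b of None \<Rightarrow> 0 | Some a \<Rightarrow> \<pi> x a)"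

definition term_action :: "'a option \<Rightarrow> real" where
  "term_action = (\<lambda>b. if b = None then 1 else 0)"

text \<open>Occupancy density (w.r.t. the base measure) of layer h \<ge> 2 under an extended policy,
  evaluated at non-terminal states of layer h.  The transition density is
  x' \<mapsto> mu_{h+1}(x')^T phi_h(x,a); mass sent through the terminal action never returns.\<close>

fun occ :: "('x, 'a, 'd::finite) lr_mdp \<Rightarrow> ('x \<Rightarrow> 'a option \<Rightarrow> real) \<Rightarrow> nat \<Rightarrow> 'x \<Rightarrow> ennreal" where
  "occ M \<pi> (Suc (Suc 0)) x' =
     (\<integral>\<^sup>+x\<in>layer_set M 1. (\<Sum>a\<in>acts M. ennreal (\<pi> x (Some a)) *
        ennreal (mu M 2 x' \<bullet> phi M 1 x a)) \<partial>init M)"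
| "occ M \<pi> (Suc (Suc (Suc k))) x' =
     (\<integral>\<^sup>+x\<in>layer_set M (Suc (Suc k)). occ M \<pi> (Suc (Suc k)) x *
        (\<Sum>a\<in>acts M. ennreal (\<pi> x (Some a)) *
           ennreal (mu M (Suc (Suc (Suc k))) x' \<bullet> phi M (Suc (Suc k)) x a)) \<partial>base M)"
| "occ M \<pi> _ x' = 0"

definition reach :: "('x, 'a, 'd::finite) lr_mdp \<Rightarrow> ('x \<Rightarrow> 'a option \<Rightarrow> real) set
    \<Rightarrow> nat \<Rightarrow> real \<Rightarrow> 'x set" where
  "reach M Ps h \<eta> =
     (if h = 1 then layer_set M 1
      else {x \<in> layer_set M h. \<exists>\<pi>\<in>Ps. ennreal (\<eta> * norm (mu M h x)) \<le> occ M \<pi> h x})"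

fun trunc_class :: "('x, 'a, 'd::finite) lr_mdp \<Rightarrow> real \<Rightarrow> nat
    \<Rightarrow> ('x \<Rightarrow> 'a option \<Rightarrow> real) set" where
  "trunc_class M \<eta> 0 = {\<pi>. ext_policy M \<pi>}"
| "trunc_class M \<eta> (Suc h) =
     {\<pi>. \<exists>\<pi>'\<in>trunc_class M \<eta> h.
        (\<forall>x\<in>space (base M). layer M x \<noteq> Suc h \<longrightarrow> \<pi> x = \<pi>' x) \<and>
        (\<forall>x\<in>layer_set M (Suc h).
           \<pi> x = (if x \<in> reach M (trunc_class M \<eta> h) (Suc h) \<eta> then \<pi>' x else term_action))}"

definition trunc_policies :: "('x, 'a, 'd::finite) lr_mdp \<Rightarrow> real \<Rightarrow> ('x \<Rightarrow> 'a option \<Rightarrow> real) set" where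
  "trunc_policies M \<eta> = trunc_class M \<eta> (horizon M)"

definition rel_policy_cover :: "('x, 'a, 'd::finite) lr_mdp \<Rightarrow> ('x \<Rightarrow> 'a option \<Rightarrow> real) pmf
    \<Rightarrow> real \<Rightarrow> real \<Rightarrow> ('x \<Rightarrow> 'a option \<Rightarrow> real) set \<Rightarrow> nat \<Rightarrow> bool" where
  "rel_policy_cover M Q \<alpha> \<eta> Ps h \<longleftrightarrow>
     (\<forall>x\<in>layer_set M h.
        ennreal (\<eta> * norm (mu M h x)) \<le> (SUP \<pi>'\<in>Ps. occ M \<pi>' h x) \<longrightarrow>
        ennreal \<alpha> * (SUP \<pi>'\<in>Ps. occ M \<pi>' h x) \<le> (\<integral>\<^sup>+\<pi>. occ M \<pi> h x \<partial>measure_pmf Q))"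

definition policy_cover :: "('x, 'a, 'd::finite) lr_mdp \<Rightarrow> ('x \<Rightarrow> 'a \<Rightarrow> real) pmf
    \<Rightarrow> real \<Rightarrow> real \<Rightarrow> nat \<Rightarrow> bool" where
  "policy_cover M P \<alpha> \<epsilon> h \<longleftrightarrow>
     (\<forall>x\<in>layer_set M h.
        ennreal (\<epsilon> * norm (mu M h x))
          \<le> (SUP \<pi>'\<in>{\<pi>. markov_policy M \<pi>}. occ M (embed_policy \<pi>') h x) \<longrightarrow>
        ennreal \<alpha> * (SUP \<pi>'\<in>{\<pi>. markov_policy M \<pi>}. occ M (embed_policy \<pi>') h x)
          \<le> (\<integral>\<^sup>+\<pi>. occ M (embed_policy \<pi>) h x \<partial>measure_pmf P))"

end

theory Submission
  imports Defs
begin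

text \<open>Truncate a Markov policy \<pi>: at every state y of layers 2..H whose occupancy under the
  (already truncated) policy is below \<eta> \<parallel>\<mu>(y)\<parallel>, play the terminal action instead. On real
  actions the result is dominated by a member of \<Pi>-bar_\<eta>. Each truncated layer k loses mass at
  most \<eta> \<integral> \<parallel>\<mu>_k\<parallel> \<le> 2 \<eta> d^(3/2), because \<mu>_k integrated against indicators of the sign sets
  of its coordinates is bounded by \<surd>d. The mass missing before layer h, at most
  (h - 2) 2 \<eta> d^(3/2), reaches x \<in> X_h with density at most \<parallel>\<mu>_h(x)\<parallel> since \<parallel>\<phi>\<parallel> \<le> 1. Hence
  d^\<pi>(x) \<le> sup over \<Pi>-bar_\<eta> of the occupancy at x + 2 H d^(3/2) \<eta> \<parallel>\<mu>_h(x)\<parallel>. If the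
  supremum of d^\<pi>(x) over Markov policies is at least \<epsilon> \<parallel>\<mu>_h(x)\<parallel>, the error term is at most
  half of it, so the supremum over \<Pi>-bar_\<eta> is at least half of it and at least \<eta> \<parallel>\<mu>_h(x)\<parallel>;
  the relative cover then applies, losing the factor 2.\<close>

lemma nn_integral_pos_inner_le:
  fixes v :: "'x \<Rightarrow> 'b::euclidean_space"
  assumes v: "v \<in> borel_measurable N"
    and bounded: "\<And>g. g \<in> borel_measurable N \<Longrightarrow> (\<forall>x\<in>space N. 0 \<le> g x \<and> g x \<le> 1) \<Longrightarrow>
        integrable N (\<lambda>x. g x *\<^sub>R v x) \<and> norm (\<integral>x. g x *\<^sub>R v x \<partial>N) \<le> c"
    and u: "norm u \<le> 1"
  shows "(\<integral>\<^sup>+x. ennreal (max (v x \<bullet> u) 0) \<partial>N) \<le> ennreal c"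
proof -
  define g where "g x = (if 0 \<le> v x \<bullet> u then 1 else 0::real)" for x
  have "g \<in> borel_measurable N"
    unfolding g_def using v by measurable
  moreover have "\<forall>x\<in>space N. 0 \<le> g x \<and> g x \<le> 1"
    by (simp add: g_def)
  ultimately have int: "integrable N (\<lambda>x. g x *\<^sub>R v x)" and c: "norm (\<integral>x. g x *\<^sub>R v x \<partial>N) \<le> c"
    using bounded by auto
  have pos_part: "(g x *\<^sub>R v x) \<bullet> u = max (v x \<bullet> u) 0" for x
    by (simp add: g_def)
  have "(\<integral>\<^sup>+x. ennreal (max (v x \<bullet> u) 0) \<partial>N) = ennreal (\<integral>x. (g x *\<^sub>R v x) \<bullet> u \<partial>N)"
    unfolding pos_part[symmetric]
    by (rule nn_integral_eq_integral[OF integrable_inner_left[OF int]]) (simp only: pos_part, simp)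
  also have "(\<integral>x. (g x *\<^sub>R v x) \<bullet> u \<partial>N) = (\<integral>x. g x *\<^sub>R v x \<partial>N) \<bullet> u"
    by (rule integral_inner_left[OF int])
  also have "\<dots> \<le> norm (\<integral>x. g x *\<^sub>R v x \<partial>N) * norm u"
    by (rule norm_cauchy_schwarz)
  also have "\<dots> \<le> c"
    using c u by (metis mult_left_le norm_ge_zero order_trans)
  finally show ?thesis
    by (simp add: ennreal_leI)
qed

text \<open>Each coordinate is the sum of its positive and negative parts, and each of these is
  the integral of v, against the indicator of a sign set, paired with a unit vector.\<close>

lemma nn_integral_norm_le_of_bounded_partial_integrals:
  fixes v :: "'x \<Rightarrow> real ^ 'n"
  assumes v: "v \<in> borel_measurable N"
    and bounded: "\<And>g. g \<in> borel_measurable N \<Longrightarrow> (\<forall>x\<in>space N. 0 \<le> g x \<and> g x \<le> 1) \<Longrightarrow>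
        integrable N (\<lambda>x. g x *\<^sub>R v x) \<and> norm (\<integral>x. g x *\<^sub>R v x \<partial>N) \<le> c"
  shows "(\<integral>\<^sup>+x. ennreal (norm (v x)) \<partial>N) \<le> ennreal (2 * c * CARD('n))"
proof -
  have "0 \<le> c"
    using bounded[of "\<lambda>_. 0"] by (auto intro: order_trans[OF norm_ge_zero])
  have v_nth: "(\<lambda>x. v x $ i) \<in> borel_measurable N" for i
    using v unfolding cart_eq_inner_axis by measurable
  have abs_nth: "\<bar>v x $ i\<bar> = max (v x \<bullet> axis i 1) 0 + max (v x \<bullet> axis i (-1)) 0" for x i
    by (simp add: inner_axis max_def)
  have axis_norm: "norm (axis i (1::real)) \<le> 1" "norm (axis i (-1::real)) \<le> 1" for i
  proof -
    have "axis i (-1::real) = - axis i 1"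
      by (simp add: axis_def vec_eq_iff)
    then show "norm (axis i (1::real)) \<le> 1" "norm (axis i (-1::real)) \<le> 1"
      by simp_all
  qed
  have nth_bound: "(\<integral>\<^sup>+x. ennreal \<bar>v x $ i\<bar> \<partial>N) \<le> ennreal (2 * c)" for i
  proof -
    have "(\<integral>\<^sup>+x. ennreal \<bar>v x $ i\<bar> \<partial>N)
        = (\<integral>\<^sup>+x. ennreal (max (v x \<bullet> axis i 1) 0) \<partial>N) + (\<integral>\<^sup>+x. ennreal (max (v x \<bullet> axis i (-1)) 0) \<partial>N)"
      unfolding abs_nth using v by (subst nn_integral_add[symmetric]) (auto simp: ennreal_plus)
    also have "\<dots> \<le> ennreal c + ennreal c"
      by (intro add_mono nn_integral_pos_inner_le[OF v bounded] axis_norm)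
    finally show ?thesis
      using \<open>0 \<le> c\<close> by (simp add: ennreal_plus[symmetric])
  qed
  have "(\<integral>\<^sup>+x. ennreal (norm (v x)) \<partial>N) \<le> (\<integral>\<^sup>+x. (\<Sum>i\<in>UNIV. ennreal \<bar>v x $ i\<bar>) \<partial>N)"
    by (intro nn_integral_mono) (simp add: norm_le_l1_cart)
  also have "\<dots> = (\<Sum>i\<in>UNIV. \<integral>\<^sup>+x. ennreal \<bar>v x $ i\<bar> \<partial>N)"
    using v_nth by (intro nn_integral_sum) auto
  also have "\<dots> \<le> (\<Sum>i\<in>(UNIV::'n set). ennreal (2 * c))"
    by (intro sum_mono nth_bound)
  finally show ?thesis
    by (simp add: ennreal_of_nat_eq_real_of_nat ennreal_mult' mult.commute)
qed

locale low_rank_model =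
  fixes M :: "('x, 'a, 'd::finite) lr_mdp"
  assumes low_rank: "low_rank_mdp M"
begin

lemma finite_acts: "finite (acts M)"
  and sigma_finite_base: "sigma_finite_measure (base M)"
  and sets_layer_set [measurable]: "layer_set M h \<in> sets (base M)"
  and sets_init: "sets (init M) = sets (base M)"
  and prob_space_init: "prob_space (init M)"
  and emeasure_init_layer_1: "emeasure (init M) (layer_set M 1) = 1"
  using low_rank unfolding low_rank_mdp_def by auto

lemma phi_measurable: "h \<in> {1..<horizon M} \<Longrightarrow> a \<in> acts M \<Longrightarrow>
    (\<lambda>x. indicator (layer_set M h) x *\<^sub>R phi M h x a) \<in> borel_measurable (base M)"
  and mu_measurable: "h \<in> {2..horizon M} \<Longrightarrow>
    (\<lambda>x. indicator (layer_set M h) x *\<^sub>R mu M h x) \<in> borel_measurable (base M)"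
  and nn_integral_transition: "h \<in> {1..<horizon M} \<Longrightarrow> x \<in> layer_set M h \<Longrightarrow> a \<in> acts M \<Longrightarrow>
    (\<integral>\<^sup>+x'. ennreal (mu M (Suc h) x' \<bullet> phi M h x a) * indicator (layer_set M (Suc h)) x' \<partial>base M) = 1"
  and norm_phi_le_1: "h \<in> {1..<horizon M} \<Longrightarrow> x \<in> layer_set M h \<Longrightarrow> a \<in> acts M \<Longrightarrow>
    norm (phi M h x a) \<le> 1"
  and mu_partial_integrals: "h \<in> {2..horizon M} \<Longrightarrow> g \<in> borel_measurable (base M) \<Longrightarrow>
    (\<forall>x\<in>layer_set M h. 0 \<le> g x \<and> g x \<le> 1) \<Longrightarrow>
    integrable (base M) (\<lambda>x. (indicator (layer_set M h) x * g x) *\<^sub>R mu M h x) \<and>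
    norm (\<integral>x. (indicator (layer_set M h) x * g x) *\<^sub>R mu M h x \<partial>base M) \<le> sqrt (real CARD('d))"
  using low_rank unfolding low_rank_mdp_def by auto

lemma norm_mu_measurable:
  assumes "h \<in> {2..horizon M}"
  shows "(\<lambda>y. ennreal (norm (mu M h y)) * indicator (layer_set M h) y) \<in> borel_measurable (base M)"
proof -
  have "(\<lambda>y. ennreal (norm (mu M h y)) * indicator (layer_set M h) y) =
      (\<lambda>y. ennreal (norm (indicator (layer_set M h) y *\<^sub>R mu M h y)))"
    by (simp add: fun_eq_iff indicator_def)
  also have "\<dots> \<in> borel_measurable (base M)"
    using mu_measurable[OF assms] by measurable
  finally show ?thesis .
qed

lemma nn_integral_norm_mu_le:
  assumes h: "h \<in> {2..horizon M}"
  shows "(\<integral>\<^sup>+y. ennreal (norm (mu M h y)) * indicator (layer_set M h) y \<partial>base M)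
    \<le> ennreal (2 * sqrt (real CARD('d)) * real CARD('d))"
proof -
  let ?v = "\<lambda>y. indicator (layer_set M h) y *\<^sub>R mu M h y"
  have "(\<integral>\<^sup>+y. ennreal (norm (?v y)) \<partial>base M) \<le> ennreal (2 * sqrt (real CARD('d)) * real CARD('d))"
  proof (rule nn_integral_norm_le_of_bounded_partial_integrals[OF mu_measurable[OF h]])
    fix g :: "'x \<Rightarrow> real"
    assume g: "g \<in> borel_measurable (base M)" "\<forall>x\<in>space (base M). 0 \<le> g x \<and> g x \<le> 1"
    then have "\<forall>x\<in>layer_set M h. 0 \<le> g x \<and> g x \<le> 1"
      by (auto simp: layer_set_def)
    moreover have "(\<lambda>x. g x *\<^sub>R ?v x) = (\<lambda>x. (indicator (layer_set M h) x * g x) *\<^sub>R mu M h x)"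
      by (simp add: fun_eq_iff mult.commute)
    ultimately show "integrable (base M) (\<lambda>x. g x *\<^sub>R ?v x) \<and>
        norm (\<integral>x. g x *\<^sub>R ?v x \<partial>base M) \<le> sqrt (real CARD('d))"
      using mu_partial_integrals[OF h g(1)] by simp
  qed
  moreover have "ennreal (norm (?v y)) = ennreal (norm (mu M h y)) * indicator (layer_set M h) y" for y
    by (simp add: indicator_def)
  ultimately show ?thesis
    by simp
qed

text \<open>Layer 1 is integrated against init M with density 1, later layers against base M
  with density occ (which is 0 on layer 1).\<close>

definition layer_measure :: "nat \<Rightarrow> 'x measure" where
  "layer_measure k = (if k = 1 then init M else base M)"

definition occ_weight :: "('x \<Rightarrow> 'a option \<Rightarrow> real) \<Rightarrow> nat \<Rightarrow> 'x \<Rightarrow> ennreal" where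
  "occ_weight \<sigma> k y = (if k = 1 then 1 else occ M \<sigma> k y)"

definition step_density :: "('x \<Rightarrow> 'a option \<Rightarrow> real) \<Rightarrow> nat \<Rightarrow> 'x \<Rightarrow> 'x \<Rightarrow> ennreal" where
  "step_density \<sigma> k y x =
     (\<Sum>a\<in>acts M. ennreal (\<sigma> y (Some a)) * ennreal (mu M (Suc k) x \<bullet> phi M k y a))"

definition continue_prob :: "('x \<Rightarrow> 'a option \<Rightarrow> real) \<Rightarrow> 'x \<Rightarrow> ennreal" where
  "continue_prob \<sigma> y = (\<Sum>a\<in>acts M. ennreal (\<sigma> y (Some a)))"

definition layer_mass :: "('x \<Rightarrow> 'a option \<Rightarrow> real) \<Rightarrow> nat \<Rightarrow> ennreal" where
  "layer_mass \<sigma> k = (\<integral>\<^sup>+y. occ M \<sigma> k y * indicator (layer_set M k) y \<partial>base M)"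

definition policy_measurable :: "('x \<Rightarrow> 'a option \<Rightarrow> real) \<Rightarrow> bool" where
  "policy_measurable \<sigma> \<longleftrightarrow> (\<forall>a\<in>acts M. (\<lambda>y. \<sigma> y (Some a)) \<in> borel_measurable (base M))"

lemma sets_layer_measure: "sets (layer_measure k) = sets (base M)"
  by (simp add: layer_measure_def sets_init)

lemma sigma_finite_layer_measure: "sigma_finite_measure (layer_measure k)"
  by (simp add: layer_measure_def sigma_finite_base prob_space_init prob_space_imp_sigma_finite)

lemma measurable_layer_measure: "f \<in> borel_measurable (base M) \<Longrightarrow> f \<in> borel_measurable (layer_measure k)"
  using measurable_cong_sets[OF sets_layer_measure refl] by blast

lemma occ_Suc_eq:
  assumes "1 \<le> k"
  shows "occ M \<sigma> (Suc k) x =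
    (\<integral>\<^sup>+y. occ_weight \<sigma> k y * step_density \<sigma> k y x * indicator (layer_set M k) y \<partial>layer_measure k)"
proof (cases "k = 1")
  case True
  then show ?thesis
    by (simp add: occ_weight_def step_density_def layer_measure_def numeral_2_eq_2)
next
  case False
  then obtain j where "k = Suc (Suc j)"
    using assms by (metis One_nat_def Suc_le_D not0_implies_Suc)
  then show ?thesis
    by (simp add: occ_weight_def step_density_def layer_measure_def)
qed

lemma step_density_indicator_eq:
  "step_density \<sigma> k y x * indicator (layer_set M (Suc k)) x * indicator (layer_set M k) y =
    (\<Sum>a\<in>acts M. ennreal (\<sigma> y (Some a)) *
       ennreal ((indicator (layer_set M (Suc k)) x *\<^sub>R mu M (Suc k) x) \<bullet>
                (indicator (layer_set M k) y *\<^sub>R phi M k y a)))"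
  by (simp add: step_density_def indicator_def sum_distrib_right)

lemma occ_integrand_measurable:
  assumes \<sigma>: "policy_measurable \<sigma>" and k: "k \<in> {1..<horizon M}"
    and w: "(\<lambda>y. occ_weight \<sigma> k y * indicator (layer_set M k) y) \<in> borel_measurable (layer_measure k)"
  shows "(\<lambda>(x, y). occ_weight \<sigma> k y * indicator (layer_set M k) y *
      (step_density \<sigma> k y x * indicator (layer_set M (Suc k)) x * indicator (layer_set M k) y))
    \<in> borel_measurable (base M \<Otimes>\<^sub>M layer_measure k)"
proof -
  let ?B = "base M \<Otimes>\<^sub>M layer_measure k"
  have snd: "(\<lambda>p. g (snd p)) \<in> borel_measurable ?B"
    if "g \<in> borel_measurable (base M)" for g :: "'x \<Rightarrow> 'b::topological_space"
    using measurable_compose[OF measurable_snd[of "base M"] measurable_layer_measure[OF that]] by (simp add: comp_def)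
  have "(\<lambda>p. occ_weight \<sigma> k (snd p) * indicator (layer_set M k) (snd p)) \<in> borel_measurable ?B"
    using measurable_compose[OF measurable_snd[of "base M"] w] by (simp add: comp_def)
  moreover have "(\<lambda>p. \<sigma> (snd p) (Some a)) \<in> borel_measurable ?B"
    and "(\<lambda>p. indicator (layer_set M k) (snd p) *\<^sub>R phi M k (snd p) a) \<in> borel_measurable ?B"
    if "a \<in> acts M" for a
    using that \<sigma> k phi_measurable by (auto simp: policy_measurable_def intro!: snd)
  moreover have "(\<lambda>p. indicator (layer_set M (Suc k)) (fst p) *\<^sub>R mu M (Suc k) (fst p)) \<in> borel_measurable ?B"
    using measurable_compose[OF measurable_fst mu_measurable[of "Suc k"]] k by (simp add: comp_def)
  ultimately show ?thesis
    unfolding case_prod_beta' step_density_indicator_eq by measurable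
qed

lemma occ_indicator_eq:
  assumes "1 \<le> k"
  shows "occ M \<sigma> (Suc k) x * indicator (layer_set M (Suc k)) x =
    (\<integral>\<^sup>+y. occ_weight \<sigma> k y * indicator (layer_set M k) y *
      (step_density \<sigma> k y x * indicator (layer_set M (Suc k)) x * indicator (layer_set M k) y)
     \<partial>layer_measure k)"
  unfolding occ_Suc_eq[OF assms]
  by (cases "x \<in> layer_set M (Suc k)") (auto simp: indicator_def mult_ac intro!: nn_integral_cong)

lemma occ_weight_measurable:
  assumes \<sigma>: "policy_measurable \<sigma>"
  shows "k \<in> {1..horizon M} \<Longrightarrow>
    (\<lambda>y. occ_weight \<sigma> k y * indicator (layer_set M k) y) \<in> borel_measurable (layer_measure k)"
proof (induction k)
  case (Suc j)
  show ?case
  proof (cases "j = 0")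
    case True
    then show ?thesis
      by (auto simp: occ_weight_def intro!: measurable_layer_measure)
  next
    case False
    then have j: "j \<in> {1..<horizon M}" "1 \<le> j"
      using Suc.prems by auto
    have "(\<lambda>x. occ M \<sigma> (Suc j) x * indicator (layer_set M (Suc j)) x) \<in> borel_measurable (base M)"
      unfolding occ_indicator_eq[OF j(2)]
      using occ_integrand_measurable[OF \<sigma> j(1)] Suc.IH j
      by (intro sigma_finite_measure.borel_measurable_nn_integral[OF sigma_finite_layer_measure]) auto
    then show ?thesis
      using False by (simp add: occ_weight_def layer_measure_def)
  qed
qed simp

lemma occ_measurable:
  assumes "policy_measurable \<sigma>" "k \<in> {2..horizon M}"
  shows "(\<lambda>y. occ M \<sigma> k y * indicator (layer_set M k) y) \<in> borel_measurable (base M)"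
  using occ_weight_measurable[OF assms(1), of k] assms(2) by (simp add: occ_weight_def layer_measure_def)

lemma occ_continue_prob_measurable:
  assumes "policy_measurable \<sigma>" "k \<in> {2..horizon M}"
  shows "(\<lambda>y. occ M \<sigma> k y * continue_prob \<sigma> y * indicator (layer_set M k) y) \<in> borel_measurable (base M)"
proof -
  have "(\<lambda>y. \<sigma> y (Some a)) \<in> borel_measurable (base M)" if "a \<in> acts M" for a
    using assms(1) that by (simp add: policy_measurable_def)
  then have "(\<lambda>y. occ M \<sigma> k y * indicator (layer_set M k) y * continue_prob \<sigma> y) \<in> borel_measurable (base M)"
    using occ_measurable[OF assms] unfolding continue_prob_def by measurable
  then show ?thesis
    by (simp add: mult_ac)
qed

lemma transition_density_measurable:
  assumes "k \<in> {1..<horizon M}"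
  shows "(\<lambda>x. ennreal (mu M (Suc k) x \<bullet> phi M k y a) * indicator (layer_set M (Suc k)) x)
    \<in> borel_measurable (base M)"
proof -
  have "(\<lambda>x. ennreal ((indicator (layer_set M (Suc k)) x *\<^sub>R mu M (Suc k) x) \<bullet> phi M k y a))
      \<in> borel_measurable (base M)"
    using mu_measurable[of "Suc k"] assms
    by (intro measurable_compose[OF _ measurable_ennreal] borel_measurable_inner) auto
  moreover have "ennreal ((indicator (layer_set M (Suc k)) x *\<^sub>R mu M (Suc k) x) \<bullet> phi M k y a) =
      ennreal (mu M (Suc k) x \<bullet> phi M k y a) * indicator (layer_set M (Suc k)) x" for x
    by (simp add: indicator_def)
  ultimately show ?thesis
    by simp
qed

lemma step_density_measurable:
  assumes "k \<in> {1..<horizon M}"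
  shows "(\<lambda>x. step_density \<sigma> k y x * indicator (layer_set M (Suc k)) x) \<in> borel_measurable (base M)"
  using transition_density_measurable[OF assms]
  unfolding step_density_def sum_distrib_right mult.assoc by measurable

lemma nn_integral_step_density:
  assumes "k \<in> {1..<horizon M}" "y \<in> layer_set M k"
  shows "(\<integral>\<^sup>+x. step_density \<sigma> k y x * indicator (layer_set M (Suc k)) x \<partial>base M) = continue_prob \<sigma> y"
  using transition_density_measurable[OF assms(1)] nn_integral_transition[OF assms]
  unfolding step_density_def sum_distrib_right mult.assoc
  by (simp add: nn_integral_sum nn_integral_cmult continue_prob_def)

lemma layer_mass_Suc_eq:
  assumes \<sigma>: "policy_measurable \<sigma>" and k: "k \<in> {1..<horizon M}"
  shows "layer_mass \<sigma> (Suc k) =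
    (\<integral>\<^sup>+y. occ_weight \<sigma> k y * continue_prob \<sigma> y * indicator (layer_set M k) y \<partial>layer_measure k)"
proof -
  interpret pair_sigma_finite "base M" "layer_measure k"
    by (intro pair_sigma_finite.intro sigma_finite_base sigma_finite_layer_measure)
  let ?F = "\<lambda>x y. occ_weight \<sigma> k y * indicator (layer_set M k) y *
    (step_density \<sigma> k y x * indicator (layer_set M (Suc k)) x * indicator (layer_set M k) y)"
  have w: "(\<lambda>y. occ_weight \<sigma> k y * indicator (layer_set M k) y) \<in> borel_measurable (layer_measure k)"
    using occ_weight_measurable[OF \<sigma>] k by auto
  have inner: "(\<integral>\<^sup>+x. ?F x y \<partial>base M) = occ_weight \<sigma> k y * continue_prob \<sigma> y * indicator (layer_set M k) y"
    for y
  proof (cases "y \<in> layer_set M k")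
    case True
    have "(\<integral>\<^sup>+x. ?F x y \<partial>base M) =
        occ_weight \<sigma> k y * (\<integral>\<^sup>+x. step_density \<sigma> k y x * indicator (layer_set M (Suc k)) x \<partial>base M)"
      using True step_density_measurable[OF k] by (simp add: nn_integral_cmult)
    then show ?thesis
      using True nn_integral_step_density[OF k True] by simp
  qed simp
  have "layer_mass \<sigma> (Suc k) = (\<integral>\<^sup>+x. \<integral>\<^sup>+y. ?F x y \<partial>layer_measure k \<partial>base M)"
    unfolding layer_mass_def using occ_indicator_eq[of k \<sigma>] k by simp
  also have "\<dots> = (\<integral>\<^sup>+y. \<integral>\<^sup>+x. ?F x y \<partial>base M \<partial>layer_measure k)"
    using occ_integrand_measurable[OF \<sigma> k w] by (rule Fubini'[symmetric])
  finally show ?thesis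
    unfolding inner .
qed

lemma layer_mass_2_eq:
  assumes "policy_measurable \<sigma>" "2 \<le> horizon M"
  shows "layer_mass \<sigma> 2 = (\<integral>\<^sup>+y. continue_prob \<sigma> y * indicator (layer_set M 1) y \<partial>init M)"
  using layer_mass_Suc_eq[OF assms(1), of 1] assms(2)
  by (simp add: numeral_2_eq_2 occ_weight_def layer_measure_def)

lemma layer_mass_Suc_eq_occ:
  assumes "policy_measurable \<sigma>" "2 \<le> k" "Suc k \<le> horizon M"
  shows "layer_mass \<sigma> (Suc k) =
    (\<integral>\<^sup>+y. occ M \<sigma> k y * continue_prob \<sigma> y * indicator (layer_set M k) y \<partial>base M)"
  using layer_mass_Suc_eq[OF assms(1), of k] assms(2,3) by (simp add: occ_weight_def layer_measure_def)

lemma occ_step_integrand_measurable: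
  assumes \<sigma>: "policy_measurable \<sigma>" and k: "2 \<le> k" "Suc k \<le> horizon M"
    and x: "x \<in> layer_set M (Suc k)"
  shows "(\<lambda>y. occ M \<sigma> k y * step_density \<sigma> k y x * indicator (layer_set M k) y) \<in> borel_measurable (base M)"
proof -
  have kH: "k \<in> {1..<horizon M}"
    using k by auto
  have w: "(\<lambda>y. occ_weight \<sigma> k y * indicator (layer_set M k) y) \<in> borel_measurable (layer_measure k)"
    using occ_weight_measurable[OF \<sigma>] k by auto
  have xB: "x \<in> space (base M)"
    using x by (simp add: layer_set_def)
  from measurable_compose[OF measurable_Pair1'[OF xB] occ_integrand_measurable[OF \<sigma> kH w]]
  have "(\<lambda>y. occ_weight \<sigma> k y * indicator (layer_set M k) y *
      (step_density \<sigma> k y x * indicator (layer_set M (Suc k)) x * indicator (layer_set M k) y))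
      \<in> borel_measurable (layer_measure k)"
    by simp
  also have "(\<lambda>y. occ_weight \<sigma> k y * indicator (layer_set M k) y *
      (step_density \<sigma> k y x * indicator (layer_set M (Suc k)) x * indicator (layer_set M k) y)) =
      (\<lambda>y. occ M \<sigma> k y * step_density \<sigma> k y x * indicator (layer_set M k) y)"
    using k x by (auto simp: fun_eq_iff occ_weight_def indicator_def)
  finally show ?thesis
    using k by (simp add: layer_measure_def)
qed

lemma occ_mono:
  assumes "\<forall>y\<in>space (base M). layer M y < k \<longrightarrow> (\<forall>a\<in>acts M. \<sigma> y (Some a) \<le> \<sigma>' y (Some a))"
  shows "occ M \<sigma> k x \<le> occ M \<sigma>' k x"
  using assms
proof (induction k arbitrary: x)
  case (Suc j)
  show ?case
  proof (cases "j = 0")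
    case False
    then have j: "1 \<le> j"
      by simp
    have "occ_weight \<sigma> j y \<le> occ_weight \<sigma>' j y" for y
      using Suc by (simp add: occ_weight_def)
    moreover have "step_density \<sigma> j y x \<le> step_density \<sigma>' j y x" if "y \<in> layer_set M j" for y
      unfolding step_density_def using Suc.prems that
      by (intro sum_mono mult_right_mono ennreal_leI) (auto simp: layer_set_def)
    ultimately show ?thesis
      unfolding occ_Suc_eq[OF j]
      by (intro nn_integral_mono) (auto simp: indicator_def intro!: mult_mono)
  qed simp
qed simp

lemma occ_cong:
  assumes "\<forall>y\<in>space (base M). layer M y < k \<longrightarrow> (\<forall>a\<in>acts M. \<sigma> y (Some a) = \<sigma>' y (Some a))"
  shows "occ M \<sigma> k x = occ M \<sigma>' k x"
  using occ_mono[of k \<sigma> \<sigma>' x] occ_mono[of k \<sigma>' \<sigma> x] assms by (auto intro: antisym)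

lemma step_density_le:
  assumes "k \<in> {1..<horizon M}" "y \<in> layer_set M k"
  shows "step_density \<sigma> k y x \<le> ennreal (norm (mu M (Suc k) x)) * continue_prob \<sigma> y"
proof -
  have "mu M (Suc k) x \<bullet> phi M k y a \<le> norm (mu M (Suc k) x)" if "a \<in> acts M" for a
    using norm_cauchy_schwarz[of "mu M (Suc k) x" "phi M k y a"] norm_phi_le_1[OF assms that]
    by (metis mult_left_le norm_ge_zero order_trans)
  then have "step_density \<sigma> k y x \<le> (\<Sum>a\<in>acts M. ennreal (\<sigma> y (Some a)) * ennreal (norm (mu M (Suc k) x)))"
    unfolding step_density_def by (intro sum_mono mult_left_mono ennreal_leI) auto
  then show ?thesis
    by (simp add: continue_prob_def sum_distrib_left mult_ac)
qed

text \<open>This is well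
  defined because the occupancy of layer l only depends on the policy at layers below l.\<close>

primrec truncation :: "real \<Rightarrow> ('x \<Rightarrow> 'a option \<Rightarrow> real) \<Rightarrow> nat \<Rightarrow> ('x \<Rightarrow> 'a option \<Rightarrow> real)" where
  "truncation \<eta> e 0 = e"
| "truncation \<eta> e (Suc n) = (\<lambda>y.
     if layer M y = Suc n \<and> 2 \<le> Suc n \<and>
        \<not> ennreal (\<eta> * norm (mu M (Suc n) y)) \<le> occ M (truncation \<eta> e n) (Suc n) y
     then term_action else truncation \<eta> e n y)"

lemma truncation_cases: "truncation \<eta> e n y = e y \<or> truncation \<eta> e n y = term_action"
  by (induction n) auto

lemma truncation_beyond: "n < layer M y \<Longrightarrow> truncation \<eta> e n y = e y"
  by (induction n) auto

lemma truncation_stable: "n \<le> m \<Longrightarrow> layer M y \<le> n \<Longrightarrow> truncation \<eta> e m y = truncation \<eta> e n y"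
  by (induction m) (auto simp: le_Suc_eq)

lemma truncation_layer_1: "layer M y \<le> 1 \<Longrightarrow> truncation \<eta> e m y = e y"
  using truncation_stable[of 1 m y] by (cases m) auto

lemma occ_truncation_stable:
  assumes "2 \<le> l" "l \<le> m"
  shows "occ M (truncation \<eta> e m) l = occ M (truncation \<eta> e (l - 1)) l"
  using assms truncation_stable[of "l - 1" m] by (intro ext occ_cong) auto

lemma truncation_eq:
  assumes "2 \<le> layer M y" "layer M y \<le> m"
  shows "truncation \<eta> e m y =
    (if ennreal (\<eta> * norm (mu M (layer M y) y)) \<le> occ M (truncation \<eta> e m) (layer M y) y
     then e y else term_action)"
proof -
  obtain j where j: "layer M y = Suc j"
    using assms by (cases "layer M y") auto
  have "truncation \<eta> e m y = truncation \<eta> e (Suc j) y"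
    using truncation_stable[of "Suc j" m y] assms j by auto
  moreover have "occ M (truncation \<eta> e m) (Suc j) = occ M (truncation \<eta> e j) (Suc j)"
    using occ_truncation_stable[of "Suc j" m] assms j by simp
  ultimately show ?thesis
    using assms j truncation_beyond[of j y] by auto
qed

text \<open>The dominating member of trunc_class cuts exactly the unreachable states. Such a state
  has low occupancy under the dominating policy, hence under the truncation, which therefore
  cuts it too.\<close>

lemma truncation_le_trunc_class:
  assumes "ext_policy M e"
  shows "\<exists>p\<in>trunc_class M \<eta> n.
    (\<forall>y\<in>space (base M). \<forall>a\<in>acts M. truncation \<eta> e n y (Some a) \<le> p y (Some a) \<and> 0 \<le> p y (Some a)) \<and>
    (\<forall>y\<in>space (base M). n < layer M y \<longrightarrow> p y = e y)"
proof (induction n)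
  case 0
  then show ?case
    using assms by (auto simp: ext_policy_def)
next
  case (Suc n)
  then obtain p where p: "p \<in> trunc_class M \<eta> n"
    and dom: "\<forall>y\<in>space (base M). \<forall>a\<in>acts M. truncation \<eta> e n y (Some a) \<le> p y (Some a) \<and> 0 \<le> p y (Some a)"
    and beyond: "\<forall>y\<in>space (base M). n < layer M y \<longrightarrow> p y = e y"
    by blast
  define R where "R = reach M (trunc_class M \<eta> n) (Suc n) \<eta>"
  define p' where "p' y = (if y \<in> layer_set M (Suc n) \<and> y \<notin> R then term_action else p y)" for y
  have "p' \<in> trunc_class M \<eta> (Suc n)"
    unfolding trunc_class.simps mem_Collect_eq
    by (rule bexI[OF _ p]) (auto simp: p'_def R_def layer_set_def)
  moreover have nonneg: "\<forall>y\<in>space (base M). \<forall>a\<in>acts M. 0 \<le> p' y (Some a)"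
    using dom by (auto simp: p'_def term_action_def)
  moreover have "truncation \<eta> e (Suc n) y (Some a) \<le> p' y (Some a)"
    if y: "y \<in> space (base M)" and a: "a \<in> acts M" for y a
  proof (cases "y \<in> layer_set M (Suc n) \<and> y \<notin> R")
    case True
    have "n \<noteq> 0"
    proof
      assume "n = 0"
      then have "R = layer_set M (Suc n)"
        by (simp add: R_def reach_def)
      then show False
        using True by simp
    qed
    have "\<not> ennreal (\<eta> * norm (mu M (Suc n) y)) \<le> occ M (truncation \<eta> e n) (Suc n) y"
    proof
      assume "ennreal (\<eta> * norm (mu M (Suc n) y)) \<le> occ M (truncation \<eta> e n) (Suc n) y"
      also have "\<dots> \<le> occ M p (Suc n) y"
        using dom by (intro occ_mono) auto
      finally show False
        using True p \<open>n \<noteq> 0\<close> by (auto simp: R_def reach_def)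
    qed
    then show ?thesis
      using True \<open>n \<noteq> 0\<close> nonneg y a by (auto simp: layer_set_def term_action_def)
  next
    case False
    then show ?thesis
      using dom y a by (auto simp: p'_def term_action_def)
  qed
  moreover have "\<forall>y\<in>space (base M). Suc n < layer M y \<longrightarrow> p' y = e y"
    using beyond by (auto simp: p'_def layer_set_def)
  ultimately show ?case
    by blast
qed

lemma truncation_policy_measurable:
  assumes e: "policy_measurable e"
  shows "n \<le> horizon M \<Longrightarrow> policy_measurable (truncation \<eta> e n)"
proof (induction n)
  case (Suc n)
  then have IH: "policy_measurable (truncation \<eta> e n)"
    by simp
  show ?case
  proof (cases "n = 0")
    case True
    then have "truncation \<eta> e (Suc n) = truncation \<eta> e n"
      by auto
    then show ?thesis
      using IH by simp
  next
    case False
    then have n: "Suc n \<in> {2..horizon M}"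
      using Suc.prems by auto
    let ?low = "\<lambda>y. occ M (truncation \<eta> e n) (Suc n) y * indicator (layer_set M (Suc n)) y
      < ennreal (\<eta> * norm (indicator (layer_set M (Suc n)) y *\<^sub>R mu M (Suc n) y))"
    have meas: "(\<lambda>y. if y \<in> layer_set M (Suc n) \<and> ?low y then 0 else truncation \<eta> e n y (Some a))
        \<in> borel_measurable (base M)" if "a \<in> acts M" for a
    proof -
      have "(\<lambda>y. truncation \<eta> e n y (Some a)) \<in> borel_measurable (base M)"
        using IH that by (simp add: policy_measurable_def)
      then show ?thesis
        using occ_measurable[OF IH n] mu_measurable[OF n] by measurable
    qed
    have eq: "truncation \<eta> e (Suc n) y (Some a) =
        (if y \<in> layer_set M (Suc n) \<and> ?low y then 0 else truncation \<eta> e n y (Some a))"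
      if "y \<in> space (base M)" for y a
      using False that by (auto simp: layer_set_def term_action_def not_le)
    show ?thesis
      unfolding policy_measurable_def
    proof
      fix a assume a: "a \<in> acts M"
      have "(\<lambda>y. truncation \<eta> e (Suc n) y (Some a)) \<in> borel_measurable (base M) \<longleftrightarrow>
          (\<lambda>y. if y \<in> layer_set M (Suc n) \<and> ?low y then 0 else truncation \<eta> e n y (Some a))
            \<in> borel_measurable (base M)"
        by (rule measurable_cong) (rule eq)
      then show "(\<lambda>y. truncation \<eta> e (Suc n) y (Some a)) \<in> borel_measurable (base M)"
        using meas[OF a] by blast
    qed
  qed
qed (simp add: e)

lemma ext_policy_embed_policy:
  assumes "markov_policy M \<pi>"
  shows "ext_policy M (embed_policy \<pi>)"
proof -
  have sum: "(\<Sum>b\<in>insert None (Some ` acts M). embed_policy \<pi> x b) = (\<Sum>a\<in>acts M. \<pi> x a)" for x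
    using finite_acts by (simp add: embed_policy_def sum.reindex)
  have "(\<lambda>x. embed_policy \<pi> x b) \<in> borel_measurable (base M)" if "b \<in> insert None (Some ` acts M)" for b
    using assms that by (auto simp: embed_policy_def markov_policy_def)
  then show ?thesis
    using assms unfolding ext_policy_def sum by (auto simp: markov_policy_def embed_policy_def)
qed

lemma policy_measurable_embed_policy: "markov_policy M \<pi> \<Longrightarrow> policy_measurable (embed_policy \<pi>)"
  by (simp add: policy_measurable_def markov_policy_def embed_policy_def)

lemma continue_prob_embed_policy:
  assumes "markov_policy M \<pi>" "y \<in> space (base M)"
  shows "continue_prob (embed_policy \<pi>) y = 1"
proof -
  have "continue_prob (embed_policy \<pi>) y = ennreal (\<Sum>a\<in>acts M. \<pi> y a)"
    using assms unfolding continue_prob_def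
    by (subst sum_ennreal) (auto simp: embed_policy_def markov_policy_def)
  then show ?thesis
    using assms by (simp add: markov_policy_def)
qed

lemma embed_policy_ne_term_action: "embed_policy \<pi> y \<noteq> term_action"
proof
  assume "embed_policy \<pi> y = term_action"
  then have "embed_policy \<pi> y None = 1"
    by (simp add: term_action_def)
  then show False
    by (simp add: embed_policy_def)
qed

lemma layer_mass_embed_policy:
  assumes \<pi>: "markov_policy M \<pi>" and k: "2 \<le> k" "k \<le> horizon M"
  shows "layer_mass (embed_policy \<pi>) k = 1"
  using k
proof (induction k rule: nat_induct_at_least)
  case base
  have "layer_mass (embed_policy \<pi>) 2 =
      (\<integral>\<^sup>+y. continue_prob (embed_policy \<pi>) y * indicator (layer_set M 1) y \<partial>init M)"
    by (rule layer_mass_2_eq[OF policy_measurable_embed_policy[OF \<pi>] base])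
  also have "\<dots> = (\<integral>\<^sup>+y. indicator (layer_set M 1) y \<partial>init M)"
    by (rule nn_integral_cong)
      (simp add: continue_prob_embed_policy[OF \<pi>] sets_eq_imp_space_eq[OF sets_init])
  also have "\<dots> = 1"
    using emeasure_init_layer_1 sets_init by simp
  finally show ?case .
next
  case (Suc k)
  have "layer_mass (embed_policy \<pi>) (Suc k) =
      (\<integral>\<^sup>+y. occ M (embed_policy \<pi>) k y * continue_prob (embed_policy \<pi>) y * indicator (layer_set M k) y \<partial>base M)"
    by (rule layer_mass_Suc_eq_occ[OF policy_measurable_embed_policy[OF \<pi>] Suc.hyps Suc.prems])
  also have "\<dots> = layer_mass (embed_policy \<pi>) k"
    unfolding layer_mass_def by (rule nn_integral_cong) (simp add: continue_prob_embed_policy[OF \<pi>])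
  finally show ?case
    using Suc by simp
qed

context
  fixes \<pi> :: "'x \<Rightarrow> 'a \<Rightarrow> real" and \<eta> :: real
  assumes \<pi>: "markov_policy M \<pi>" and \<eta>: "0 \<le> \<eta>"
begin

abbreviation truncated :: "'x \<Rightarrow> 'a option \<Rightarrow> real" where
  "truncated \<equiv> truncation \<eta> (embed_policy \<pi>) (horizon M)"

lemma policy_measurable_truncated: "policy_measurable truncated"
  using truncation_policy_measurable[OF policy_measurable_embed_policy[OF \<pi>]] by simp

lemma continue_prob_truncated:
  assumes "y \<in> space (base M)"
  shows "continue_prob truncated y = (if truncated y = term_action then 0 else 1)"
  using truncation_cases[of \<eta> "embed_policy \<pi>" "horizon M" y] continue_prob_embed_policy[OF \<pi> assms]
  by (auto simp: continue_prob_def term_action_def)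

lemma truncated_le_embed_policy:
  assumes "y \<in> space (base M)" "a \<in> acts M"
  shows "truncated y (Some a) \<le> embed_policy \<pi> y (Some a)"
  using truncation_cases[of \<eta> "embed_policy \<pi>" "horizon M" y] \<pi> assms
  by (auto simp: term_action_def embed_policy_def markov_policy_def)

lemma occ_truncated_le: "occ M truncated k y \<le> occ M (embed_policy \<pi>) k y"
  by (intro occ_mono) (simp add: truncated_le_embed_policy)

text \<open>A state is cut only if its occupancy is below \<eta> \<parallel>\<mu>(y)\<parallel>.\<close>

lemma layer_mass_truncated_le:
  assumes k: "2 \<le> k" "Suc k \<le> horizon M"
  shows "layer_mass truncated k \<le>
    layer_mass truncated (Suc k) + ennreal (\<eta> * (2 * sqrt (real CARD('d)) * real CARD('d)))"
proof -
  have kH: "k \<in> {2..horizon M}"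
    using k by auto
  let ?kept = "\<lambda>y. occ M truncated k y * continue_prob truncated y * indicator (layer_set M k) y"
  let ?cut = "\<lambda>y. ennreal \<eta> * (ennreal (norm (mu M k y)) * indicator (layer_set M k) y)"
  have split: "occ M truncated k y * indicator (layer_set M k) y \<le> ?kept y + ?cut y"
    if y: "y \<in> space (base M)" for y
  proof (cases "y \<in> layer_set M k \<and> truncated y = term_action")
    case True
    then have "truncated y \<noteq> embed_policy \<pi> y"
      using embed_policy_ne_term_action by metis
    then have "\<not> ennreal (\<eta> * norm (mu M k y)) \<le> occ M truncated k y"
      using True k truncation_eq[of y "horizon M" \<eta> "embed_policy \<pi>"]
      by (auto simp: layer_set_def split: if_splits)
    then show ?thesis
      using True \<eta> by (simp add: ennreal_mult add_increasing)
  next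
    case False
    then show ?thesis
      using continue_prob_truncated[OF y] by (auto simp: indicator_def)
  qed
  have kept: "?kept \<in> borel_measurable (base M)"
    by (rule occ_continue_prob_measurable[OF policy_measurable_truncated kH])
  have "layer_mass truncated k \<le> (\<integral>\<^sup>+y. ?kept y + ?cut y \<partial>base M)"
    unfolding layer_mass_def by (intro nn_integral_mono split)
  also have "\<dots> = layer_mass truncated (Suc k) + ennreal \<eta> *
      (\<integral>\<^sup>+y. ennreal (norm (mu M k y)) * indicator (layer_set M k) y \<partial>base M)"
    using kept norm_mu_measurable[OF kH]
    by (simp add: nn_integral_add nn_integral_cmult layer_mass_Suc_eq_occ[OF policy_measurable_truncated k])
  also have "\<dots> \<le> layer_mass truncated (Suc k) + ennreal \<eta> * ennreal (2 * sqrt (real CARD('d)) * real CARD('d))"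
    by (intro add_left_mono mult_left_mono nn_integral_norm_mu_le kH) simp
  finally show ?thesis
    using \<eta> by (simp add: ennreal_mult)
qed

lemma layer_mass_truncated_ge:
  assumes "2 \<le> k" "k \<le> horizon M"
  shows "1 \<le> layer_mass truncated k + ennreal (real (k - 2) * (\<eta> * (2 * sqrt (real CARD('d)) * real CARD('d))))"
  using assms
proof (induction k rule: nat_induct_at_least)
  case base
  have "layer_mass truncated 2 = layer_mass (embed_policy \<pi>) 2"
    unfolding layer_mass_2_eq[OF policy_measurable_truncated base]
      layer_mass_2_eq[OF policy_measurable_embed_policy[OF \<pi>] base]
    by (intro nn_integral_cong) (auto simp: continue_prob_def layer_set_def indicator_def truncation_layer_1)
  then show ?case
    using layer_mass_embed_policy[OF \<pi> order_refl base] by simp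
next
  case (Suc k)
  let ?c = "\<eta> * (2 * sqrt (real CARD('d)) * real CARD('d))"
  have "ennreal ?c + ennreal (real (k - 2) * ?c) = ennreal (?c + real (k - 2) * ?c)"
    using \<eta> by (simp add: ennreal_plus)
  also have "?c + real (k - 2) * ?c = real (Suc k - 2) * ?c"
    using Suc.hyps by (simp add: of_nat_diff algebra_simps)
  finally have c: "ennreal ?c + ennreal (real (k - 2) * ?c) = ennreal (real (Suc k - 2) * ?c)" .
  have "1 \<le> layer_mass truncated k + ennreal (real (k - 2) * ?c)"
    using Suc by simp
  also have "\<dots> \<le> layer_mass truncated (Suc k) + ennreal ?c + ennreal (real (k - 2) * ?c)"
    by (intro add_right_mono layer_mass_truncated_le Suc)
  also have "\<dots> = layer_mass truncated (Suc k) + ennreal (real (Suc k - 2) * ?c)"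
    by (simp only: add.assoc c)
  finally show ?case .
qed

text \<open>L is the mass the truncation has lost before layer k + 1. It reaches x \<in> X_{k+1} with
  density at most \<parallel>\<mu>_{k+1}(x)\<parallel>, because \<parallel>\<phi>\<parallel> \<le> 1.\<close>

lemma occ_embed_policy_Suc_le:
  assumes k: "2 \<le> k" "Suc k \<le> horizon M" and x: "x \<in> layer_set M (Suc k)"
  shows "\<exists>L. L + layer_mass truncated (Suc k) = 1 \<and>
    occ M (embed_policy \<pi>) (Suc k) x \<le> occ M truncated (Suc k) x + L * ennreal (norm (mu M (Suc k) x))"
proof -
  let ?e = "embed_policy \<pi>"
  let ?kept = "\<lambda>y. occ M truncated k y * continue_prob truncated y * indicator (layer_set M k) y"
  let ?c = "ennreal (norm (mu M (Suc k) x))"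
  have kH: "k \<in> {2..horizon M}" "k \<in> {1..<horizon M}" "1 \<le> k"
    using k by auto
  define D where "D y = occ M ?e k y * indicator (layer_set M k) y - ?kept y" for y
  have kept_le: "?kept y \<le> occ M ?e k y * indicator (layer_set M k) y" if "y \<in> space (base M)" for y
  proof -
    have "occ M truncated k y * continue_prob truncated y \<le> occ M truncated k y * 1"
      using continue_prob_truncated[OF that] by (intro mult_left_mono) auto
    also have "\<dots> \<le> occ M ?e k y"
      using occ_truncated_le by simp
    finally show ?thesis
      by (intro mult_right_mono) auto
  qed
  then have dec: "occ M ?e k y * indicator (layer_set M k) y = ?kept y + D y" if "y \<in> space (base M)" for y
    unfolding D_def using that by (intro ennreal_ineq_diff_add) auto
  have kept: "?kept \<in> borel_measurable (base M)"
    by (rule occ_continue_prob_measurable[OF policy_measurable_truncated kH(1)])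
  have D: "D \<in> borel_measurable (base M)"
    unfolding D_def[abs_def] using kept occ_measurable[OF policy_measurable_embed_policy[OF \<pi>] kH(1)]
    by measurable
  have lost: "(\<integral>\<^sup>+y. D y \<partial>base M) + layer_mass truncated (Suc k) = 1"
  proof -
    have "1 = layer_mass ?e k"
      using layer_mass_embed_policy[OF \<pi>] k by simp
    also have "\<dots> = (\<integral>\<^sup>+y. ?kept y + D y \<partial>base M)"
      unfolding layer_mass_def by (rule nn_integral_cong) (simp add: dec)
    also have "\<dots> = layer_mass truncated (Suc k) + (\<integral>\<^sup>+y. D y \<partial>base M)"
      by (simp add: nn_integral_add[OF kept D] layer_mass_Suc_eq_occ[OF policy_measurable_truncated k])
    finally show ?thesis
      by (simp add: add.commute)
  qed
  have pointwise: "occ M ?e k y * step_density ?e k y x * indicator (layer_set M k) y \<le>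
      occ M truncated k y * step_density truncated k y x * indicator (layer_set M k) y + D y * ?c"
    if y: "y \<in> space (base M)" for y
  proof (cases "y \<in> layer_set M k")
    case True
    have kept_step: "?kept y * step_density ?e k y x = occ M truncated k y * step_density truncated k y x"
      using True truncation_cases[of \<eta> ?e "horizon M" y] continue_prob_truncated[OF y]
      by (auto simp: step_density_def term_action_def)
    have "D y * step_density ?e k y x \<le> D y * (?c * continue_prob ?e y)"
      by (intro mult_left_mono step_density_le kH True) simp
    then have "D y * step_density ?e k y x \<le> D y * ?c"
      using continue_prob_embed_policy[OF \<pi> y] by simp
    then show ?thesis
      using True dec[OF y] kept_step by (simp add: distrib_right add_mono)
  qed simp
  have "occ M ?e (Suc k) x = (\<integral>\<^sup>+y. occ M ?e k y * step_density ?e k y x * indicator (layer_set M k) y \<partial>base M)"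
    using occ_Suc_eq[OF kH(3)] k by (simp add: occ_weight_def layer_measure_def)
  also have "\<dots> \<le> (\<integral>\<^sup>+y. occ M truncated k y * step_density truncated k y x * indicator (layer_set M k) y
      + D y * ?c \<partial>base M)"
    by (intro nn_integral_mono pointwise)
  also have "\<dots> = occ M truncated (Suc k) x + (\<integral>\<^sup>+y. D y \<partial>base M) * ?c"
    using occ_step_integrand_measurable[OF policy_measurable_truncated k x] D occ_Suc_eq[OF kH(3)] k
    by (simp add: nn_integral_add nn_integral_multc occ_weight_def layer_measure_def)
  finally show ?thesis
    using lost by blast
qed

lemma occ_embed_policy_le_truncated:
  assumes h: "h \<in> {2..horizon M}" and x: "x \<in> layer_set M h"
  shows "occ M (embed_policy \<pi>) h x \<le> occ M truncated h x +
    ennreal (norm (mu M h x)) * ennreal (real (h - 2) * (\<eta> * (2 * sqrt (real CARD('d)) * real CARD('d))))"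
proof (cases "h = 2")
  case True
  then have "occ M (embed_policy \<pi>) h x = occ M truncated h x"
    by (intro occ_cong) (auto simp: truncation_layer_1)
  then show ?thesis
    by simp
next
  case False
  then obtain k where hk: "h = Suc k" and k: "2 \<le> k" "Suc k \<le> horizon M"
    using h by (cases h) auto
  let ?c = "ennreal (real (h - 2) * (\<eta> * (2 * sqrt (real CARD('d)) * real CARD('d))))"
  obtain L where L: "L + layer_mass truncated h = 1"
    and bound: "occ M (embed_policy \<pi>) h x \<le> occ M truncated h x + L * ennreal (norm (mu M h x))"
    using occ_embed_policy_Suc_le[OF k] x hk by blast
  have "layer_mass truncated h + L \<le> layer_mass truncated h + ?c"
    using L layer_mass_truncated_ge[of h] h by (simp add: add.commute)
  moreover have "layer_mass truncated h \<le> 1"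
    using L by (metis add.commute le_iff_add)
  then have "layer_mass truncated h \<noteq> \<infinity>"
    by (auto simp: top_unique)
  ultimately have "L \<le> ?c"
    by (simp add: ennreal_add_left_cancel_le)
  note bound
  also have "occ M truncated h x + L * ennreal (norm (mu M h x)) \<le>
      occ M truncated h x + ennreal (norm (mu M h x)) * ?c"
    using mult_right_mono[OF \<open>L \<le> ?c\<close>, of "ennreal (norm (mu M h x))"]
    by (intro add_left_mono) (simp add: mult.commute)
  finally show ?thesis .
qed

end

lemma occ_embed_policy_le_SUP_trunc_policies:
  assumes \<pi>: "markov_policy M \<pi>" and \<eta>: "0 \<le> \<eta>"
    and h: "h \<in> {2..horizon M}" and x: "x \<in> layer_set M h"
  shows "occ M (embed_policy \<pi>) h x \<le> (SUP p\<in>trunc_policies M \<eta>. occ M p h x) +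
    ennreal (2 * real (horizon M) * real CARD('d) powr (3 / 2) * \<eta> * norm (mu M h x))"
proof -
  let ?d = "real CARD('d)"
  obtain p where p: "p \<in> trunc_class M \<eta> (horizon M)"
    and dom: "\<forall>y\<in>space (base M). \<forall>a\<in>acts M.
      truncation \<eta> (embed_policy \<pi>) (horizon M) y (Some a) \<le> p y (Some a) \<and> 0 \<le> p y (Some a)"
    using truncation_le_trunc_class[OF ext_policy_embed_policy[OF \<pi>]] by blast
  have "occ M (truncation \<eta> (embed_policy \<pi>) (horizon M)) h x \<le> occ M p h x"
    using dom by (intro occ_mono) auto
  also have "\<dots> \<le> (SUP p\<in>trunc_policies M \<eta>. occ M p h x)"
    using p by (intro SUP_upper) (simp add: trunc_policies_def)
  finally have trunc: "occ M (truncation \<eta> (embed_policy \<pi>) (horizon M)) h x \<le> (SUP p\<in>trunc_policies M \<eta>. occ M p h x)" .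
  have "?d powr (3 / 2) = ?d powr (1 / 2 + 1)"
    by (simp add: field_simps)
  also have "\<dots> = ?d powr (1 / 2) * ?d powr 1"
    by (rule powr_add)
  also have "\<dots> = sqrt ?d * ?d"
    by (simp add: powr_half_sqrt)
  finally have dpow: "?d powr (3 / 2) = sqrt ?d * ?d" .
  let ?C = "\<eta> * (2 * sqrt ?d * ?d)"
  have "real (h - 2) \<le> real (horizon M)"
    using h by simp
  then have "norm (mu M h x) * (real (h - 2) * ?C) \<le> norm (mu M h x) * (real (horizon M) * ?C)"
    using \<eta> by (intro mult_left_mono[OF mult_right_mono]) simp_all
  also have "\<dots> = 2 * real (horizon M) * (sqrt ?d * ?d) * \<eta> * norm (mu M h x)"
    by (simp add: ac_simps)
  finally have bound: "norm (mu M h x) * (real (h - 2) * ?C) \<le>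
      2 * real (horizon M) * ?d powr (3 / 2) * \<eta> * norm (mu M h x)"
    unfolding dpow .
  have "ennreal (norm (mu M h x)) * ennreal (real (h - 2) * ?C) = ennreal (norm (mu M h x) * (real (h - 2) * ?C))"
    by (rule ennreal_mult'[symmetric]) simp
  also have "\<dots> \<le> ennreal (2 * real (horizon M) * ?d powr (3 / 2) * \<eta> * norm (mu M h x))"
    using bound by (rule ennreal_leI)
  finally have error: "ennreal (norm (mu M h x)) * ennreal (real (h - 2) * ?C) \<le>
      ennreal (2 * real (horizon M) * ?d powr (3 / 2) * \<eta> * norm (mu M h x))" .
  have "occ M (embed_policy \<pi>) h x \<le> occ M (truncation \<eta> (embed_policy \<pi>) (horizon M)) h x +
      ennreal (norm (mu M h x)) * ennreal (real (h - 2) * ?C)"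
    by (rule occ_embed_policy_le_truncated[OF \<pi> \<eta> h x])
  also have "\<dots> \<le> (SUP p\<in>trunc_policies M \<eta>. occ M p h x) +
      ennreal (2 * real (horizon M) * ?d powr (3 / 2) * \<eta> * norm (mu M h x))"
    by (rule add_mono[OF trunc error])
  finally show ?thesis .
qed

end

lemma ennreal_half_mult_le_of_le_add:
  fixes S T E :: ennreal and a b \<alpha> :: real
  assumes S: "S \<le> T + ennreal a" and twice: "ennreal (2 * a) \<le> S"
    and "b \<le> a" "0 \<le> a" "0 \<le> \<alpha>"
    and cover: "ennreal b \<le> T \<Longrightarrow> ennreal \<alpha> * T \<le> E"
  shows "ennreal (\<alpha> / 2) * S \<le> E"
proof -
  have "ennreal a + ennreal a = ennreal (2 * a)"
    by (simp only: mult_2 ennreal_plus[OF \<open>0 \<le> a\<close> \<open>0 \<le> a\<close>])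
  also have "\<dots> \<le> T + ennreal a"
    using twice S by (rule order_trans)
  also have "\<dots> = ennreal a + T"
    by (rule add.commute)
  finally have a_le: "ennreal a \<le> T"
    by (simp add: ennreal_add_left_cancel_le)
  have "ennreal (\<alpha> / 2) * S \<le> ennreal (\<alpha> / 2) * (T + T)"
    using order_trans[OF S add_left_mono[OF a_le]] by (rule mult_left_mono) simp
  also have "\<dots> = (ennreal (\<alpha> / 2) * 2) * T"
    by (simp add: mult_2_right distrib_left distrib_right)
  also have "ennreal (\<alpha> / 2) * 2 = ennreal \<alpha>"
    using \<open>0 \<le> \<alpha>\<close> ennreal_mult[of "\<alpha> / 2" 2] by simp
  also have "ennreal \<alpha> * T \<le> E"
    using \<open>b \<le> a\<close> a_le by (intro cover) (meson ennreal_leI order_trans)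
  finally show ?thesis .
qed

lemma le_mult_horizon_dim_factor:
  fixes t :: real
  assumes "1 \<le> H" "0 \<le> t"
  shows "t \<le> 2 * real H * real CARD('d::finite) powr (3 / 2) * t"
proof -
  have "1 \<le> real CARD('d) powr (3 / 2)"
    by (rule ge_one_powr_ge_zero) (auto simp: Suc_le_eq)
  moreover have "1 \<le> 2 * real H"
    using assms(1) by simp
  ultimately have "1 * 1 \<le> 2 * real H * real CARD('d) powr (3 / 2)"
    by (intro mult_mono) auto
  then have "1 * t \<le> (2 * real H * real CARD('d) powr (3 / 2)) * t"
    using assms(2) by (intro mult_right_mono) auto
  then show ?thesis
    by simp
qed

theorem mainTheorem12:
  fixes M :: "('x, 'a, 'd::finite) lr_mdp"
    and P :: "('x \<Rightarrow> 'a \<Rightarrow> real) pmf"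
    and h :: nat and \<alpha> \<eta> :: real
  assumes "low_rank_mdp M"
    and "h \<in> {2..horizon M}"
    and "0 < \<alpha>" and "\<alpha> < 1" and "0 < \<eta>"
    and "finite (set_pmf P)"
    and "\<forall>\<pi>\<in>set_pmf P. markov_policy M \<pi>"
    and "rel_policy_cover M (map_pmf embed_policy P) \<alpha> \<eta> (trunc_policies M \<eta>) h"
  shows "policy_cover M P (\<alpha> / 2)
           (4 * real (horizon M) * real CARD('d) powr (3 / 2) * \<eta>) h"
  unfolding policy_cover_def
proof (intro ballI impI)
  interpret low_rank_model M
    by (rule low_rank_model.intro) (rule assms(1))
  fix x assume x: "x \<in> layer_set M h"
  let ?c = "2 * real (horizon M) * real CARD('d) powr (3 / 2)"
  let ?Markov = "SUP \<pi>'\<in>{\<pi>. markov_policy M \<pi>}. occ M (embed_policy \<pi>') h x"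
  let ?Trunc = "SUP p\<in>trunc_policies M \<eta>. occ M p h x"
  assume large: "ennreal (4 * real (horizon M) * real CARD('d) powr (3 / 2) * \<eta> * norm (mu M h x)) \<le> ?Markov"
  have "4 * real (horizon M) * real CARD('d) powr (3 / 2) * \<eta> * norm (mu M h x) =
      2 * (?c * \<eta> * norm (mu M h x))"
    by simp
  with large have twice: "ennreal (2 * (?c * \<eta> * norm (mu M h x))) \<le> ?Markov"
    by (simp only:)
  have Markov_le: "?Markov \<le> ?Trunc + ennreal (?c * \<eta> * norm (mu M h x))"
  proof (rule SUP_least)
    fix \<pi> assume "\<pi> \<in> {\<pi>. markov_policy M \<pi>}"
    then show "occ M (embed_policy \<pi>) h x \<le> ?Trunc + ennreal (?c * \<eta> * norm (mu M h x))"
      using assms(2,5) x by (intro occ_embed_policy_le_SUP_trunc_policies) auto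
  qed
  have reach_le: "\<eta> * norm (mu M h x) \<le> ?c * \<eta> * norm (mu M h x)"
    using le_mult_horizon_dim_factor[of "horizon M" "\<eta> * norm (mu M h x)"] assms(2,5)
    by (simp add: mult.assoc)
  have cover: "ennreal (\<eta> * norm (mu M h x)) \<le> ?Trunc \<Longrightarrow>
      ennreal \<alpha> * ?Trunc \<le> (\<integral>\<^sup>+\<pi>. occ M (embed_policy \<pi>) h x \<partial>measure_pmf P)"
    using assms(8) x unfolding rel_policy_cover_def by simp
  have "0 \<le> ?c * \<eta> * norm (mu M h x)" "0 \<le> \<alpha>"
    using assms(3,5) by simp_all
  from ennreal_half_mult_le_of_le_add[OF Markov_le twice reach_le this cover]
  show "ennreal (\<alpha> / 2) * ?Markov \<le> (\<integral>\<^sup>+\<pi>. occ M (embed_policy \<pi>) h x \<partial>measure_pmf P)" .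
qed

end
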